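(* Let $n\ge 1$ and $r\ge 1$ be integers, and consider a two-sided matching problem with a set $\mathcal{M}$ of $n$ men and a set $\mathcal{W}$ of $n+r$ women, in which each man's preference list is an independent uniformly random ordering of $\mathcal{W}$ and each woman's preference list is an independent uniformly random ordering of $\mathcal{M}$. For $x\in\mathcal{M}\cup\mathcal{W}$, let $N(x)$ be the number of stable partners of $x$. Then for every $x\in\mathcal{M}\cup\mathcal{W}$, $$\mathbb{P}\bigl(N(x)>1\bigr)\le\frac{1}{r+1}\quad\text{and}\quad\mathbb{E}\bigl(N(x)\bigr)\le 1+\frac{1}{r}.$$
   Context: Stable matchings are in the sense of Gale and Shapley (a matching pairs each man with at most one woman and vice versa; it is stable if no man and woman not matched together both strictly prefer each other to their assigned partners, being unmatched ranked below every partner). $y$ is a stable partner of $x$ if $x$ and $y$ are matched in some stable matching. *)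

theory Defs
  imports Complex_Main "HOL-Combinatorics.Multiset_Permutations"
begin

text \<open>Men are 0..<n, women are 0..<n+r. A preference list is a list (strict ranking,
  most preferred first) that is a permutation of the other side.\<close>

definition prefers :: "nat list \<Rightarrow> nat \<Rightarrow> nat \<Rightarrow> bool" where
  "prefers xs a b \<longleftrightarrow> (\<exists>i j. i < j \<and> j < length xs \<and> xs ! i = a \<and> xs ! j = b)"

definition matching :: "nat \<Rightarrow> nat \<Rightarrow> (nat \<times> nat) set \<Rightarrow> bool" where
  "matching n r \<mu> \<longleftrightarrow> \<mu> \<subseteq> {..<n} \<times> {..<n+r}
     \<and> (\<forall>m w w'. (m, w) \<in> \<mu> \<longrightarrow> (m, w') \<in> \<mu> \<longrightarrow> w = w')
     \<and> (\<forall>m m' w. (m, w) \<in> \<mu> \<longrightarrow> (m', w) \<in> \<mu> \<longrightarrow> m = m')"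

text \<open>Stability: no man m and woman w, not matched together, who both strictly prefer each
  other to their assigned partners (being unmatched is ranked below every partner).\<close>
definition stable :: "nat \<Rightarrow> nat \<Rightarrow> (nat \<Rightarrow> nat list) \<Rightarrow> (nat \<Rightarrow> nat list)
     \<Rightarrow> (nat \<times> nat) set \<Rightarrow> bool" where
  "stable n r PM PW \<mu> \<longleftrightarrow> matching n r \<mu> \<and>
     \<not> (\<exists>m<n. \<exists>w<n+r. (m, w) \<notin> \<mu>
          \<and> (\<forall>w'. (m, w') \<in> \<mu> \<longrightarrow> prefers (PM m) w w')
          \<and> (\<forall>m'. (m', w) \<in> \<mu> \<longrightarrow> prefers (PW w) m m'))"

definition stable_partners_man :: "nat \<Rightarrow> nat \<Rightarrow> (nat \<Rightarrow> nat list) \<Rightarrow> (nat \<Rightarrow> nat list)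
     \<Rightarrow> nat \<Rightarrow> nat set" where
  "stable_partners_man n r PM PW m = {w. \<exists>\<mu>. stable n r PM PW \<mu> \<and> (m, w) \<in> \<mu>}"

definition stable_partners_woman :: "nat \<Rightarrow> nat \<Rightarrow> (nat \<Rightarrow> nat list) \<Rightarrow> (nat \<Rightarrow> nat list)
     \<Rightarrow> nat \<Rightarrow> nat set" where
  "stable_partners_woman n r PM PW w = {m. \<exists>\<mu>. stable n r PM PW \<mu> \<and> (m, w) \<in> \<mu>}"

text \<open>The (finite) sample space of preference profiles; uniform measure = independent
  uniform random orderings for every person.\<close>
definition profiles :: "nat \<Rightarrow> nat \<Rightarrow> ((nat \<Rightarrow> nat list) \<times> (nat \<Rightarrow> nat list)) set" where
  "profiles n r = (PiE {..<n} (\<lambda>_. permutations_of_set {..<n+r}))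
                 \<times> (PiE {..<n+r} (\<lambda>_. permutations_of_set {..<n}))"

end

theory Submission
  imports Defs
begin

text \<open>Run the man-proposing deferred acceptance algorithm and then repeatedly break up the
  couple containing \<open>x\<close>: its man moves on down his list and the algorithm is resumed. A stable
  matching that avoids the couples broken so far never lets the algorithm pass it, so if \<open>x\<close>
  has more than \<open>k\<close> stable partners, none of the first \<open>k\<close> resumptions reaches one of the \<open>r\<close>
  women left unmatched by the man-optimal matching. Given that, resumption \<open>k\<close> can avoid them
  only if its first proposal to the abandoned woman or to an unmatched woman goes to the abandoned
  woman. Exchanging that entry of the proposer's list with any of the \<open>r\<close> unmatched women leaves
  the run unchanged up to this proposal, which then fails; these exchanges are injective, so at most
  a fraction \<open>(r + 1)\<^sup>-\<^sup>k\<close> of all profiles give \<open>x\<close> more than \<open>k\<close> stable partners.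
  Summing this geometric tail gives both bounds.\<close>

definition rank :: "'a list \<Rightarrow> 'a \<Rightarrow> nat" where
  "rank xs a = (LEAST i. i < length xs \<and> xs ! i = a)"

lemma rank_less_length_and_nth:
  assumes "a \<in> set xs"
  shows "rank xs a < length xs \<and> xs ! rank xs a = a"
  unfolding rank_def
  by (rule LeastI_ex) (use assms in \<open>auto simp: in_set_conv_nth\<close>)

lemma rank_less_length: "a \<in> set xs \<Longrightarrow> rank xs a < length xs"
  using rank_less_length_and_nth[of a xs] by simp

lemma nth_rank: "a \<in> set xs \<Longrightarrow> xs ! rank xs a = a"
  using rank_less_length_and_nth[of a xs] by simp

lemma rank_nth: "distinct xs \<Longrightarrow> i < length xs \<Longrightarrow> rank xs (xs ! i) = i"
  using rank_less_length_and_nth[of "xs ! i" xs] nth_eq_iff_index_eq by auto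

lemma rank_inj: "a \<in> set xs \<Longrightarrow> b \<in> set xs \<Longrightarrow> rank xs a = rank xs b \<Longrightarrow> a = b"
  by (metis nth_rank)

lemma prefers_iff_rank:
  assumes "distinct xs"
  shows "prefers xs a b \<longleftrightarrow> a \<in> set xs \<and> b \<in> set xs \<and> rank xs a < rank xs b"
proof
  assume "prefers xs a b"
  then obtain i j where "i < j" "j < length xs" "xs ! i = a" "xs ! j = b"
    by (auto simp: prefers_def)
  then show "a \<in> set xs \<and> b \<in> set xs \<and> rank xs a < rank xs b"
    using rank_nth[OF assms] by auto
next
  assume "a \<in> set xs \<and> b \<in> set xs \<and> rank xs a < rank xs b"
  then show "prefers xs a b"
    unfolding prefers_def using rank_less_length[of b xs] nth_rank[of a xs] nth_rank[of b xs]
    by (metis order.strict_trans)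
qed

lemma prefers_total:
  "distinct xs \<Longrightarrow> a \<in> set xs \<Longrightarrow> b \<in> set xs \<Longrightarrow> a \<noteq> b \<Longrightarrow> prefers xs a b \<or> prefers xs b a"
  using prefers_iff_rank[of xs a b] prefers_iff_rank[of xs b a] rank_inj[of a xs b]
  by (auto simp: nat_neq_iff)

lemma prefers_asym: "distinct xs \<Longrightarrow> prefers xs a b \<Longrightarrow> \<not> prefers xs b a"
  using prefers_iff_rank by auto

lemma prefers_irrefl: "distinct xs \<Longrightarrow> \<not> prefers xs a a"
  using prefers_iff_rank by auto

lemma in_set_take_Suc_iff_rank:
  assumes "distinct xs" "a \<in> set xs"
  shows "a \<in> set (take (Suc q) xs) \<longleftrightarrow> rank xs a \<le> q"
proof
  assume "a \<in> set (take (Suc q) xs)"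
  then obtain i where "i < Suc q" "i < length xs" "xs ! i = a"
    by (auto simp: in_set_conv_nth)
  then show "rank xs a \<le> q" using rank_nth[OF assms(1)] by auto
next
  assume "rank xs a \<le> q"
  show "a \<in> set (take (Suc q) xs)"
  proof -
    have "rank xs a < length (take (Suc q) xs)" "take (Suc q) xs ! rank xs a = a"
      using \<open>rank xs a \<le> q\<close> rank_less_length_and_nth[OF assms(2)] by auto
    then show ?thesis by (metis nth_mem)
  qed
qed

definition swap_entries :: "'a list \<Rightarrow> nat \<Rightarrow> nat \<Rightarrow> 'a list" where
  "swap_entries xs a b = xs[a := xs ! b, b := xs ! a]"

lemma length_swap_entries [simp]: "length (swap_entries xs a b) = length xs"
  unfolding swap_entries_def by simp

lemma nth_swap_entries:
  "a < length xs \<Longrightarrow> b < length xs \<Longrightarrow> a \<noteq> b \<Longrightarrow>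
   swap_entries xs a b ! c = (if c = a then xs ! b else if c = b then xs ! a else xs ! c)"
  unfolding swap_entries_def by (auto simp: nth_list_update)

lemma swap_entries_involution:
  "a < length xs \<Longrightarrow> b < length xs \<Longrightarrow> a \<noteq> b \<Longrightarrow> swap_entries (swap_entries xs a b) a b = xs"
  by (rule nth_equalityI) (auto simp: nth_swap_entries)

lemma swap_entries_permutations_of_set:
  "xs \<in> permutations_of_set S \<Longrightarrow> a < length xs \<Longrightarrow> b < length xs \<Longrightarrow>
   swap_entries xs a b \<in> permutations_of_set S"
  unfolding swap_entries_def permutations_of_set_def by simp

lemma exists_not_in_image_lessThan:
  assumes "k < card S"
  obtains s where "s \<in> S" "s \<notin> f ` {..<k}"
proof -
  have "card (f ` {..<k}) < card S"
    using card_image_le[of "{..<k}" f] assms by simp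
  then have "\<not> S \<subseteq> f ` {..<k}"
    using card_mono[of "f ` {..<k}" S] by (metis finite_imageI finite_lessThan not_le)
  then show ?thesis using that by blast
qed

lemma funpow_fixpoint_stays:
  assumes "f ((f ^^ l) x) = (f ^^ l) x"
  shows "(f ^^ (m + l)) x = (f ^^ l) x"
  by (induction m) (use assms in auto)

section \<open>Deferred acceptance on pointer functions\<close>

text \<open>A state of the man-proposing algorithm is a pointer function \<open>q\<close>: man \<open>j\<close> currently
  proposes to the woman at index \<open>q j\<close> of his list and has proposed to all women before her.
  Index \<open>n + r\<close> means that he has exhausted his list.\<close>

locale gale_shapley =
  fixes n r :: nat and PM PW :: "nat \<Rightarrow> nat list"
begin

definition proposal :: "(nat \<Rightarrow> nat) \<Rightarrow> nat \<Rightarrow> nat" where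
  "proposal q j = PM j ! q j"

definition proposed :: "(nat \<Rightarrow> nat) \<Rightarrow> nat \<Rightarrow> nat set" where
  "proposed q j = set (take (Suc (q j)) (PM j))"

definition suitors :: "(nat \<Rightarrow> nat) \<Rightarrow> nat \<Rightarrow> nat set" where
  "suitors q w = {j. j < n \<and> w \<in> proposed q j}"

definition rejected :: "(nat \<Rightarrow> nat) \<Rightarrow> nat \<Rightarrow> bool" where
  "rejected q j \<longleftrightarrow> (\<exists>i\<in>suitors q (proposal q j). prefers (PW (proposal q j)) i j)"

definition proposal_round :: "(nat \<Rightarrow> nat) \<Rightarrow> nat \<Rightarrow> nat" where
  "proposal_round q = (\<lambda>j. if j < n \<and> q j < n+r \<and> rejected q j then Suc (q j) else q j)"

definition round_bound :: nat where
  "round_bound = Suc (n * (n+r))"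

definition run :: "(nat \<Rightarrow> nat) \<Rightarrow> nat \<Rightarrow> nat" where
  "run q = (proposal_round ^^ round_bound) q"

definition man_optimal :: "nat \<Rightarrow> nat" where
  "man_optimal = run (\<lambda>_. 0)"

definition unmatched :: "nat set" where
  "unmatched = {w. w < n+r \<and> suitors man_optimal w = {}}"

definition pointers_below :: "(nat \<Rightarrow> nat) \<Rightarrow> (nat \<times> nat) set \<Rightarrow> bool" where
  "pointers_below q \<nu> \<longleftrightarrow> (\<forall>j<n. \<forall>w. (j, w) \<in> \<nu> \<longrightarrow> q j \<le> rank (PM j) w)"

lemma proposal_round_ge: "q j \<le> proposal_round q j"
  unfolding proposal_round_def by simp

lemma proposal_round_le_Suc: "proposal_round q j \<le> Suc (q j)"
  unfolding proposal_round_def by simp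

lemma proposal_round_outside: "n \<le> j \<Longrightarrow> proposal_round q j = q j"
  unfolding proposal_round_def by simp

lemma proposal_round_le_bound: "q j \<le> n+r \<Longrightarrow> proposal_round q j \<le> n+r"
  unfolding proposal_round_def by simp

lemma funpow_round_mono: "l \<le> l' \<Longrightarrow> (proposal_round ^^ l) q j \<le> (proposal_round ^^ l') q j"
proof (induction l' arbitrary: l)
  case (Suc l')
  then have "l \<le> l' \<or> l = Suc l'" by auto
  then show ?case using Suc.IH proposal_round_ge[of "(proposal_round ^^ l') q" j]
    by (auto intro: order_trans)
qed simp

lemma funpow_round_ge: "q j \<le> (proposal_round ^^ l) q j"
  using funpow_round_mono[of 0 l] by simp

lemma funpow_round_le_bound: "q j \<le> n+r \<Longrightarrow> (proposal_round ^^ l) q j \<le> n+r"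
  by (induction l) (auto intro: proposal_round_le_bound)

lemma pointer_sum_round_less:
  assumes "proposal_round q \<noteq> q"
  shows "(\<Sum>j<n. q j) < (\<Sum>j<n. proposal_round q j)"
proof -
  obtain j where j: "proposal_round q j \<noteq> q j" using assms by blast
  then have "j < n" using proposal_round_outside by (metis not_le)
  moreover have "q j < proposal_round q j" using j proposal_round_ge[of q j] by simp
  ultimately show ?thesis using proposal_round_ge by (intro sum_strict_mono_ex1) auto
qed

text \<open>Each round that changes the state raises the pointer sum, which is at most \<open>n (n + r)\<close>.\<close>

lemma run_fixpoint:
  assumes "\<And>j. j < n \<Longrightarrow> q j \<le> n+r"
  shows "proposal_round (run q) = run q"
proof (rule ccontr)
  assume not_fixed: "proposal_round (run q) \<noteq> run q"
  have moving: "proposal_round ((proposal_round ^^ l) q) \<noteq> (proposal_round ^^ l) q"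
    if "l \<le> round_bound" for l
  proof
    assume "proposal_round ((proposal_round ^^ l) q) = (proposal_round ^^ l) q"
    from funpow_fixpoint_stays[OF this, of "round_bound - l"]
      funpow_fixpoint_stays[OF this, of "Suc round_bound - l"]
    show False
      using not_fixed that unfolding run_def by (simp add: Suc_diff_le)
  qed
  have "l \<le> (\<Sum>j<n. (proposal_round ^^ l) q j)" if "l \<le> Suc round_bound" for l
    using that
  proof (induction l)
    case (Suc l)
    then show ?case
      using pointer_sum_round_less[OF moving[of l]] by simp
  qed simp
  moreover have "(\<Sum>j<n. (proposal_round ^^ l) q j) \<le> n * (n+r)" for l
    using sum_bounded_above[of "{..<n}" "(proposal_round ^^ l) q" "n+r"] funpow_round_le_bound assms
    by (simp add: mult.commute)
  ultimately show False unfolding round_bound_def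
    by (metis Suc_n_not_le_n le_SucI order.refl order_trans)
qed

end

locale gale_shapley_ok = gale_shapley +
  assumes PM_perm: "\<And>j. j < n \<Longrightarrow> PM j \<in> permutations_of_set {..<n+r}"
    and PW_perm: "\<And>w. w < n+r \<Longrightarrow> PW w \<in> permutations_of_set {..<n}"
begin

lemma distinct_PM: "j < n \<Longrightarrow> distinct (PM j)"
  using PM_perm permutations_of_setD by blast

lemma set_PM: "j < n \<Longrightarrow> set (PM j) = {..<n+r}"
  using PM_perm permutations_of_setD by blast

lemma length_PM: "j < n \<Longrightarrow> length (PM j) = n+r"
  using distinct_PM set_PM distinct_card by fastforce

lemma distinct_PW: "w < n+r \<Longrightarrow> distinct (PW w)"
  using PW_perm permutations_of_setD by blast

lemma set_PW: "w < n+r \<Longrightarrow> set (PW w) = {..<n}"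
  using PW_perm permutations_of_setD by blast

lemma rank_PM_less: "j < n \<Longrightarrow> w < n+r \<Longrightarrow> rank (PM j) w < n+r"
  using rank_less_length length_PM set_PM by fastforce

lemma nth_rank_PM: "j < n \<Longrightarrow> w < n+r \<Longrightarrow> PM j ! rank (PM j) w = w"
  using nth_rank set_PM by fastforce

lemma rank_PM_inj: "j < n \<Longrightarrow> w < n+r \<Longrightarrow> w' < n+r \<Longrightarrow> rank (PM j) w = rank (PM j) w' \<Longrightarrow> w = w'"
  by (metis nth_rank_PM)

lemma prefers_PM_iff: "j < n \<Longrightarrow> w < n+r \<Longrightarrow> w' < n+r \<Longrightarrow>
    prefers (PM j) w w' \<longleftrightarrow> rank (PM j) w < rank (PM j) w'"
  using prefers_iff_rank[OF distinct_PM] set_PM by auto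

lemma proposal_less: "j < n \<Longrightarrow> q j < n+r \<Longrightarrow> proposal q j < n+r"
  unfolding proposal_def using length_PM set_PM nth_mem by fastforce

lemma rank_proposal: "j < n \<Longrightarrow> q j < n+r \<Longrightarrow> rank (PM j) (proposal q j) = q j"
  unfolding proposal_def using length_PM distinct_PM rank_nth by metis

lemma mem_proposed_iff: "j < n \<Longrightarrow> w < n+r \<Longrightarrow> w \<in> proposed q j \<longleftrightarrow> rank (PM j) w \<le> q j"
  unfolding proposed_def using in_set_take_Suc_iff_rank[OF distinct_PM, of j w] set_PM by simp

lemma proposal_mem_proposed: "j < n \<Longrightarrow> q j < n+r \<Longrightarrow> proposal q j \<in> proposed q j"
  using mem_proposed_iff rank_proposal proposal_less by simp

lemma proposed_mono: "q j \<le> q' j \<Longrightarrow> proposed q j \<subseteq> proposed q' j"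
  unfolding proposed_def by (intro set_take_subset_set_take) simp

lemma suitors_mono: "(\<And>j. j < n \<Longrightarrow> q j \<le> q' j) \<Longrightarrow> suitors q w \<subseteq> suitors q' w"
  unfolding suitors_def using proposed_mono by blast

lemma suitors_subset: "suitors q w \<subseteq> {..<n}"
  unfolding suitors_def by auto

section \<open>Stable matchings stay below the algorithm\<close>

abbreviation stable_matching :: "(nat \<times> nat) set \<Rightarrow> bool" where
  "stable_matching \<nu> \<equiv> stable n r PM PW \<nu>"

lemma stable_range: "stable_matching \<nu> \<Longrightarrow> (j, w) \<in> \<nu> \<Longrightarrow> j < n \<and> w < n+r"
  unfolding stable_def matching_def by blast

lemma stable_unique_woman: "stable_matching \<nu> \<Longrightarrow> (j, w) \<in> \<nu> \<Longrightarrow> (j, w') \<in> \<nu> \<Longrightarrow> w = w'"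
  unfolding stable_def matching_def by blast

lemma stable_unique_man: "stable_matching \<nu> \<Longrightarrow> (j, w) \<in> \<nu> \<Longrightarrow> (j', w) \<in> \<nu> \<Longrightarrow> j = j'"
  unfolding stable_def matching_def by blast

lemma stable_no_blocking_pair:
  assumes "stable_matching \<nu>" "j < n" "w < n+r" "(j, w) \<notin> \<nu>"
    "\<And>w'. (j, w') \<in> \<nu> \<Longrightarrow> prefers (PM j) w w'"
    "\<And>m'. (m', w) \<in> \<nu> \<Longrightarrow> prefers (PW w) j m'"
  shows False
  using assms unfolding stable_def by blast

lemma stable_finite: "stable_matching \<nu> \<Longrightarrow> finite \<nu>"
  unfolding stable_def matching_def using finite_subset by blast

lemma stable_card_women_eq_men: "stable_matching \<nu> \<Longrightarrow> card (snd ` \<nu>) = card (fst ` \<nu>)"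
  using card_image stable_unique_woman stable_unique_man
  by (metis (no_types, lifting) inj_onI prod.collapse)

lemma stable_card_women_le: "stable_matching \<nu> \<Longrightarrow> card (snd ` \<nu>) \<le> n"
  using stable_card_women_eq_men stable_range
  by (metis (no_types, lifting) card_lessThan card_mono finite_lessThan image_subsetI lessThan_iff
      prod.collapse)

lemma stable_man_matched:
  assumes "stable_matching \<nu>" "j < n"
  obtains w where "(j, w) \<in> \<nu>"
proof (rule ccontr)
  assume unmatched_j: "\<not> thesis"
  with that have "fst ` \<nu> \<subseteq> {..<n} - {j}" using stable_range[OF assms(1)] by force
  then have "card (snd ` \<nu>) < n+r"
    using stable_card_women_eq_men[OF assms(1)] card_mono[of "{..<n} - {j}" "fst ` \<nu>"] assms(2)
    by simp
  then obtain w where w: "w < n+r" "w \<notin> snd ` \<nu>"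
    using card_mono[of "snd ` \<nu>" "{..<n+r}"] stable_finite[OF assms(1)]
    by (metis card_lessThan finite_imageI not_le subsetI lessThan_iff)
  show False
    by (rule stable_no_blocking_pair[OF assms w(1)]) (use that unmatched_j w(2) in force)+
qed

text \<open>No man is ever rejected by a stable partner: the rejecting woman holds a suitor she
  prefers, and that suitor, not yet past his own stable partner, would block.\<close>

lemma pointers_below_round:
  assumes stable: "stable_matching \<nu>" and below: "pointers_below q \<nu>"
  shows "pointers_below (proposal_round q) \<nu>"
  unfolding pointers_below_def
proof (intro allI impI)
  fix j w assume j: "j < n" and jw: "(j, w) \<in> \<nu>"
  have w: "w < n+r" using stable_range[OF stable jw] by simp
  have q_le: "q j \<le> rank (PM j) w" using below j jw unfolding pointers_below_def by blast
  show "proposal_round q j \<le> rank (PM j) w"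
  proof (rule ccontr)
    assume "\<not> proposal_round q j \<le> rank (PM j) w"
    then have "q j = rank (PM j) w" "q j < n+r" "rejected q j"
      using q_le proposal_round_le_Suc[of q j] unfolding proposal_round_def
      by (auto split: if_splits)
    then have "proposal q j = w" "rejected q j"
      unfolding proposal_def using nth_rank_PM[OF j w] by simp_all
    then obtain i where i: "i \<in> suitors q w" "prefers (PW w) i j"
      unfolding rejected_def by auto
    have i_n: "i < n" and i_rank_w: "rank (PM i) w \<le> q i"
      using i(1) mem_proposed_iff[OF _ w] unfolding suitors_def by auto
    obtain w' where iw': "(i, w') \<in> \<nu>" using stable_man_matched[OF stable i_n] .
    have w': "w' < n+r" using stable_range[OF stable iw'] by simp
    have "i \<noteq> j" using i(2) prefers_irrefl[OF distinct_PW[OF w]] by blast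
    then have "w' \<noteq> w" using stable_unique_man[OF stable jw] iw' by blast
    moreover have "q i \<le> rank (PM i) w'" using below i_n iw' unfolding pointers_below_def by blast
    ultimately have "prefers (PM i) w w'"
      using i_rank_w rank_PM_inj[OF i_n w w'] prefers_PM_iff[OF i_n w w'] by fastforce
    then show False
      using stable_no_blocking_pair[OF stable i_n w] iw' i(2) \<open>w' \<noteq> w\<close>
        stable_unique_woman[OF stable iw'] stable_unique_man[OF stable jw] by blast
  qed
qed

lemma pointers_below_run: "stable_matching \<nu> \<Longrightarrow> pointers_below q \<nu> \<Longrightarrow> pointers_below (run q) \<nu>"
proof -
  assume "stable_matching \<nu>" "pointers_below q \<nu>"
  then have "pointers_below ((proposal_round ^^ l) q) \<nu>" for l
    by (induction l) (auto intro: pointers_below_round)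
  then show ?thesis unfolding run_def .
qed

section \<open>The man-optimal stable matching\<close>

lemma exists_favourite:
  assumes "w < n+r" "S \<subseteq> {..<n}" "S \<noteq> {}"
  obtains b where "b \<in> S" "\<And>i. i \<in> S \<Longrightarrow> i \<noteq> b \<Longrightarrow> prefers (PW w) b i"
proof -
  have fin: "finite S" using assms(2) finite_subset by blast
  obtain b where b: "b \<in> S" "rank (PW w) b = Min (rank (PW w) ` S)"
    using Min_in[of "rank (PW w) ` S"] fin assms(3)
    by (metis (no_types, lifting) finite_imageI image_iff image_is_empty)
  have "prefers (PW w) b i" if "i \<in> S" "i \<noteq> b" for i
  proof -
    have set: "b \<in> set (PW w)" "i \<in> set (PW w)" using b(1) that(1) assms(2) set_PW[OF assms(1)]
      by auto
    then have "rank (PW w) b \<noteq> rank (PW w) i" using rank_inj that(2) by metis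
    moreover have "rank (PW w) b \<le> rank (PW w) i" using b fin that(1) by simp
    ultimately show ?thesis using prefers_iff_rank[OF distinct_PW[OF assms(1)]] set by simp
  qed
  then show ?thesis using that b(1) by blast
qed

lemma not_rejected_iff_favourite:
  assumes "j < n" "q j < n+r"
  shows "\<not> rejected q j \<longleftrightarrow>
    (\<forall>i\<in>suitors q (proposal q j). i \<noteq> j \<longrightarrow> prefers (PW (proposal q j)) j i)"
proof -
  let ?w = "proposal q j"
  have w: "?w < n+r" using proposal_less assms by blast
  have "i \<in> set (PW ?w)" if "i \<in> suitors q ?w" for i
    using that suitors_subset set_PW[OF w] by auto
  moreover have "j \<in> set (PW ?w)" using assms(1) set_PW[OF w] by simp
  ultimately show ?thesis
    unfolding rejected_def
    using prefers_total[OF distinct_PW[OF w]] prefers_asym[OF distinct_PW[OF w]]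
      prefers_irrefl[OF distinct_PW[OF w]] by metis
qed

definition holds_suitor :: "(nat \<Rightarrow> nat) \<Rightarrow> bool" where
  "holds_suitor q \<longleftrightarrow> (\<forall>w<n+r. suitors q w \<noteq> {} \<longrightarrow>
     (\<exists>j<n. q j < n+r \<and> proposal q j = w \<and> \<not> rejected q j))"

definition round_invariant :: "(nat \<Rightarrow> nat) \<Rightarrow> bool" where
  "round_invariant q \<longleftrightarrow> (\<forall>j<n. q j < n+r) \<and> holds_suitor q"

text \<open>A man rejected by the last woman on his list would have proposed to all \<open>n + r\<close>
  women, each of them held by a different man other than him.\<close>

lemma round_invariant_round_less:
  assumes inv: "round_invariant q" and j: "j < n"
  shows "proposal_round q j < n+r"
proof (rule ccontr)
  assume "\<not> proposal_round q j < n+r"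
  moreover have "q j < n+r" using inv j unfolding round_invariant_def by blast
  ultimately have rej: "rejected q j" and last: "Suc (q j) = n+r"
    using proposal_round_le_Suc[of q j] unfolding proposal_round_def by (auto split: if_splits)
  let ?T = "{t. t < n \<and> q t < n+r \<and> \<not> rejected q t}"
  have covered: "{..<n+r} \<subseteq> proposal q ` ?T"
  proof
    fix w assume "w \<in> {..<n+r}"
    then have w: "w < n+r" by simp
    then have "j \<in> suitors q w"
      unfolding suitors_def using mem_proposed_iff[OF j w] rank_PM_less[OF j w] last j by simp
    then show "w \<in> proposal q ` ?T"
      using inv w unfolding round_invariant_def holds_suitor_def by blast
  qed
  have "n+r \<le> card (proposal q ` ?T)"
    using card_mono[OF _ covered] by simp
  also have "\<dots> \<le> card ?T" by (rule card_image_le) simp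
  also have "\<dots> \<le> card ({..<n} - {j})" using rej by (intro card_mono) auto
  finally show False using j by simp
qed

lemma newly_proposed:
  assumes "i < n" "w < n+r" "w \<in> proposed (proposal_round q) i" "w \<notin> proposed q i"
  shows "proposal_round q i = Suc (q i) \<and> proposal (proposal_round q) i = w"
proof -
  have "rank (PM i) w = Suc (q i)" "proposal_round q i = Suc (q i)"
    using assms mem_proposed_iff[OF assms(1,2)] proposal_round_le_Suc[of q i] by auto
  then show ?thesis unfolding proposal_def using nth_rank_PM[OF assms(1,2)] by simp
qed

lemma holds_suitor_round:
  assumes inv: "round_invariant q"
  shows "holds_suitor (proposal_round q)"
  unfolding holds_suitor_def
proof (intro allI impI)
  fix w assume w: "w < n+r" and "suitors (proposal_round q) w \<noteq> {}"
  then obtain b where b: "b \<in> suitors (proposal_round q) w"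
    and fav: "\<And>i. i \<in> suitors (proposal_round q) w \<Longrightarrow> i \<noteq> b \<Longrightarrow> prefers (PW w) b i"
    using exists_favourite[OF w suitors_subset] by metis
  have b_n: "b < n" and "w \<in> proposed (proposal_round q) b" using b unfolding suitors_def by auto
  have b_ptr: "proposal_round q b < n+r" using round_invariant_round_less[OF inv b_n] .
  have "proposal (proposal_round q) b = w"
  proof (cases "w \<in> proposed q b")
    case False
    then show ?thesis using newly_proposed[OF b_n w \<open>w \<in> proposed (proposal_round q) b\<close>] by simp
  next
    case True
    then have "b \<in> suitors q w" using b_n unfolding suitors_def by simp
    then obtain t where t: "t < n" "q t < n+r" "proposal q t = w" "\<not> rejected q t"
      using inv w unfolding round_invariant_def holds_suitor_def by blast
    have "t \<in> suitors q w" using proposal_mem_proposed[of t q] t unfolding suitors_def by simp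
    then have "t \<in> suitors (proposal_round q) w"
      using suitors_mono[of q "proposal_round q"] proposal_round_ge by blast
    have "t = b"
    proof (rule ccontr)
      assume "t \<noteq> b"
      then have "rejected q t"
        using fav[OF \<open>t \<in> suitors (proposal_round q) w\<close>] \<open>b \<in> suitors q w\<close> t(3)
        unfolding rejected_def by blast
      then show False using t(4) by simp
    qed
    then show ?thesis using t unfolding proposal_def proposal_round_def by simp
  qed
  moreover from this have "\<not> rejected (proposal_round q) b"
    using not_rejected_iff_favourite[of b "proposal_round q"] b_n b_ptr fav by simp
  ultimately show "\<exists>j<n. proposal_round q j < n+r \<and> proposal (proposal_round q) j = w
      \<and> \<not> rejected (proposal_round q) j"
    using b_n b_ptr by blast
qed

lemma round_invariant_round: "round_invariant q \<Longrightarrow> round_invariant (proposal_round q)"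
  using round_invariant_round_less holds_suitor_round unfolding round_invariant_def by blast

lemma round_invariant_start: "round_invariant (\<lambda>_. 0)"
  unfolding round_invariant_def holds_suitor_def
proof (intro conjI allI impI)
  fix w assume w: "w < n+r" and "suitors (\<lambda>_. 0) w \<noteq> {}"
  then obtain b where b: "b \<in> suitors (\<lambda>_. 0) w"
    and fav: "\<And>i. i \<in> suitors (\<lambda>_. 0) w \<Longrightarrow> i \<noteq> b \<Longrightarrow> prefers (PW w) b i"
    using exists_favourite[OF w suitors_subset] by metis
  have b_n: "b < n" and "rank (PM b) w = 0"
    using b mem_proposed_iff[OF _ w] unfolding suitors_def by auto
  then have "proposal (\<lambda>_. 0) b = w" unfolding proposal_def using nth_rank_PM[OF b_n w] by simp
  moreover from this have "\<not> rejected (\<lambda>_. 0) b"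
    using not_rejected_iff_favourite[of b "\<lambda>_. 0"] b_n fav by simp
  ultimately show "\<exists>j<n. (0::nat) < n+r \<and> proposal (\<lambda>_. 0) j = w \<and> \<not> rejected (\<lambda>_. 0) j"
    using b_n by auto
qed simp

lemma round_invariant_man_optimal: "round_invariant man_optimal"
proof -
  have "round_invariant ((proposal_round ^^ l) (\<lambda>_. 0))" for l
    by (induction l) (auto simp: round_invariant_start round_invariant_round)
  then show ?thesis unfolding man_optimal_def run_def .
qed

lemma man_optimal_fixpoint: "proposal_round man_optimal = man_optimal"
  unfolding man_optimal_def by (rule run_fixpoint) simp

lemma man_optimal_less: "j < n \<Longrightarrow> man_optimal j < n+r"
  using round_invariant_man_optimal unfolding round_invariant_def by blast

lemma fixpoint_not_rejected: "proposal_round q = q \<Longrightarrow> j < n \<Longrightarrow> q j < n+r \<Longrightarrow> \<not> rejected q j"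
  by (metis proposal_round_def n_not_Suc_n)

lemma inj_on_proposal_fixpoint:
  assumes fixed: "proposal_round q = q" and in_range: "\<forall>j<n. q j < n+r"
  shows "inj_on (proposal q) {..<n}"
proof (rule inj_onI, rule ccontr)
  fix j j' assume j: "j \<in> {..<n}" and j': "j' \<in> {..<n}"
    and same: "proposal q j = proposal q j'" and "j \<noteq> j'"
  let ?w = "proposal q j"
  have w: "?w < n+r" using proposal_less j in_range by simp
  have "proposal q j \<in> proposed q j" "proposal q j' \<in> proposed q j'"
    using proposal_mem_proposed j j' in_range by auto
  then have "j' \<in> suitors q ?w" "j \<in> suitors q ?w"
    using j j' same unfolding suitors_def by auto
  then have "prefers (PW ?w) j j'" "prefers (PW ?w) j' j"
    using not_rejected_iff_favourite fixpoint_not_rejected[OF fixed] j j' in_range same \<open>j \<noteq> j'\<close>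
    by (metis lessThan_iff)+
  then show False using prefers_asym[OF distinct_PW[OF w]] by blast
qed

lemma unmatched_subset: "unmatched \<subseteq> {..<n+r}"
  unfolding unmatched_def by auto

lemma proposal_man_optimal_image: "proposal man_optimal ` {..<n} = {..<n+r} - unmatched"
proof
  show "proposal man_optimal ` {..<n} \<subseteq> {..<n+r} - unmatched"
    using proposal_mem_proposed proposal_less man_optimal_less
    unfolding unmatched_def suitors_def by fastforce
  show "{..<n+r} - unmatched \<subseteq> proposal man_optimal ` {..<n}"
    using round_invariant_man_optimal
    unfolding round_invariant_def holds_suitor_def unmatched_def by blast
qed

lemma card_matched_women: "card ({..<n+r} - unmatched) = n"
  using proposal_man_optimal_image card_image[OF inj_on_proposal_fixpoint[OF man_optimal_fixpoint]]
    man_optimal_less by (metis card_lessThan)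

lemma card_unmatched: "card unmatched = r"
  using card_matched_women card_Diff_subset[OF finite_subset[OF unmatched_subset] unmatched_subset]
    card_mono[OF finite_lessThan unmatched_subset] by simp

lemma pointers_below_man_optimal: "stable_matching \<nu> \<Longrightarrow> pointers_below man_optimal \<nu>"
  unfolding man_optimal_def by (rule pointers_below_run) (auto simp: pointers_below_def)

lemma stable_matched_woman:
  assumes stable: "stable_matching \<nu>" and w: "w < n+r" "w \<notin> unmatched"
  obtains i where "(i, w) \<in> \<nu>"
proof (rule ccontr)
  assume unmatched_w: "\<not> thesis"
  obtain j where j: "j < n" "proposal man_optimal j = w"
    using proposal_man_optimal_image w by (metis Diff_iff imageE lessThan_iff)
  obtain w' where jw': "(j, w') \<in> \<nu>" using stable_man_matched[OF stable j(1)] .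
  have w': "w' < n+r" using stable_range[OF stable jw'] by simp
  have "w' \<noteq> w" using jw' that unmatched_w by blast
  moreover have "man_optimal j \<le> rank (PM j) w'"
    using pointers_below_man_optimal[OF stable] j(1) jw' unfolding pointers_below_def by blast
  moreover have "rank (PM j) w = man_optimal j"
    using rank_proposal[of j man_optimal] man_optimal_less[OF j(1)] j(1) j(2) by simp
  ultimately have "prefers (PM j) w w'"
    using rank_PM_inj[OF j(1) w(1) w'] prefers_PM_iff[OF j(1) w(1) w'] by fastforce
  then show False
    using stable_no_blocking_pair[OF stable j(1) w(1)] stable_unique_woman[OF stable jw']
      that unmatched_w by blast
qed

text \<open>The \<open>n\<close> women matched by the man-optimal matching are matched in every stable matching,
  which has only \<open>n\<close> pairs.\<close>

lemma stable_unmatched: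
  assumes stable: "stable_matching \<nu>" and u: "u \<in> unmatched"
  shows "(i, u) \<notin> \<nu>"
proof -
  have "{..<n+r} - unmatched \<subseteq> snd ` \<nu>"
    using stable_matched_woman[OF stable]
    by (metis Diff_iff lessThan_iff snd_conv subsetI image_eqI)
  then have "snd ` \<nu> = {..<n+r} - unmatched"
    using stable_card_women_le[OF stable] stable_finite[OF stable] card_matched_women
    by (metis card_seteq finite_imageI)
  then show ?thesis using u by force
qed

lemma stable_partner_before_unmatched:
  assumes stable: "stable_matching \<nu>" and jw: "(j, w) \<in> \<nu>" and u: "u \<in> unmatched"
  shows "rank (PM j) w < rank (PM j) u"
proof (rule ccontr)
  assume "\<not> rank (PM j) w < rank (PM j) u"
  moreover have j: "j < n" and w: "w < n+r" using stable_range[OF stable jw] by auto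
  moreover have u_range: "u < n+r" using u unmatched_subset by auto
  moreover have "u \<noteq> w" using stable_unmatched[OF stable u] jw by blast
  ultimately have "prefers (PM j) u w"
    using rank_PM_inj prefers_PM_iff by (metis nat_neq_iff)
  then show False
    using stable_no_blocking_pair[OF stable j u_range] stable_unmatched[OF stable u]
      stable_unique_woman[OF stable jw] by blast
qed

lemma suitors_unmatched_empty:
  assumes stable: "stable_matching \<nu>" and below: "pointers_below q \<nu>" and u: "u \<in> unmatched"
  shows "suitors q u = {}"
proof (rule ccontr)
  assume "suitors q u \<noteq> {}"
  then obtain j where j: "j < n" "u \<in> proposed q j" unfolding suitors_def by auto
  obtain w where jw: "(j, w) \<in> \<nu>" using stable_man_matched[OF stable j(1)] .
  have "rank (PM j) u \<le> q j" using j mem_proposed_iff u unmatched_subset by auto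
  moreover have "q j \<le> rank (PM j) w" using below j(1) jw unfolding pointers_below_def by blast
  ultimately show False using stable_partner_before_unmatched[OF stable jw u] by simp
qed

end

section \<open>Forcing a man to move on\<close>

text \<open>After the man-optimal run, the couple of \<open>x0\<close> is split repeatedly: at each stage the
  \<open>breakup_man\<close> (\<open>x0\<close> himself, or the man currently proposing to the woman \<open>x0\<close>) advances
  his pointer past the woman he held, the \<open>abandoned\<close> one, and the algorithm is resumed.\<close>

locale divorce_chain = gale_shapley +
  fixes x_is_man :: bool and x0 :: nat
begin

definition breakup_man :: "(nat \<Rightarrow> nat) \<Rightarrow> nat" where
  "breakup_man q = (if x_is_man then x0 else if (\<exists>j<n. q j < n+r \<and> proposal q j = x0)
     then (LEAST j. j < n \<and> q j < n+r \<and> proposal q j = x0) else 0)"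

definition break_up :: "(nat \<Rightarrow> nat) \<Rightarrow> nat \<Rightarrow> nat" where
  "break_up q = q(breakup_man q := Suc (q (breakup_man q)))"

primrec stage :: "nat \<Rightarrow> nat \<Rightarrow> nat" where
  "stage 0 = man_optimal"
| "stage (Suc k) = run (break_up (stage k))"

definition abandoned :: "nat \<Rightarrow> nat" where
  "abandoned k = proposal (stage k) (breakup_man (stage k))"

definition replay :: "nat \<Rightarrow> nat \<Rightarrow> nat \<Rightarrow> nat" where
  "replay k l = (proposal_round ^^ l) (break_up (stage k))"

definition step_succeeds :: "nat \<Rightarrow> bool" where
  "step_succeeds k \<longleftrightarrow> (\<forall>u\<in>unmatched. suitors (stage (Suc k)) u = {})"

definition steps_succeed :: "nat \<Rightarrow> bool" where
  "steps_succeed k \<longleftrightarrow> (\<forall>i<k. step_succeeds i)"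

end

locale divorce_chain_ok = divorce_chain + gale_shapley_ok +
  assumes n_pos: "n \<ge> 1" and r_pos: "r \<ge> 1" and x0_man: "x_is_man \<longrightarrow> x0 < n"
begin

lemma breakup_man_less: "breakup_man q < n"
proof -
  let ?P = "\<lambda>j. j < n \<and> q j < n+r \<and> proposal q j = x0"
  have "Least ?P < n" if "Ex ?P"
    using LeastI_ex[OF that] by blast
  then show ?thesis unfolding breakup_man_def using x0_man n_pos by auto
qed

lemma breakup_man_if_man: "x_is_man \<Longrightarrow> breakup_man q = x0"
  unfolding breakup_man_def by simp

lemma breakup_man_if_woman:
  assumes "\<not> x_is_man" "j < n" "q j < n+r" "proposal q j = x0"
  shows "q (breakup_man q) < n+r \<and> proposal q (breakup_man q) = x0"
proof -
  let ?P = "\<lambda>j. j < n \<and> q j < n+r \<and> proposal q j = x0"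
  have ex: "\<exists>j<n. q j < n+r \<and> proposal q j = x0" using assms(2-4) by blast
  have "breakup_man q = Least ?P"
    unfolding breakup_man_def if_not_P[OF assms(1)] if_P[OF ex] ..
  then show ?thesis using LeastI_ex[of ?P] ex by auto
qed

lemma break_up_ge: "q j \<le> break_up q j"
  unfolding break_up_def by simp

lemma break_up_le_Suc: "break_up q j \<le> Suc (q j)"
  unfolding break_up_def by simp

lemma break_up_breakup_man: "break_up q (breakup_man q) = Suc (q (breakup_man q))"
  unfolding break_up_def by simp

lemma pointers_below_break_up:
  assumes below: "pointers_below q \<nu>" and stable: "stable_matching \<nu>"
    and not_held: "(breakup_man q, proposal q (breakup_man q)) \<notin> \<nu>"
  shows "pointers_below (break_up q) \<nu>"
  unfolding pointers_below_def
proof (intro allI impI)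
  fix j w assume j: "j < n" and jw: "(j, w) \<in> \<nu>"
  have le: "q j \<le> rank (PM j) w" using below j jw unfolding pointers_below_def by blast
  moreover have "rank (PM j) w \<noteq> q j" if "j = breakup_man q"
    using not_held that jw nth_rank_PM[OF j] stable_range[OF stable jw] unfolding proposal_def
    by force
  ultimately show "break_up q j \<le> rank (PM j) w"
    unfolding break_up_def by auto
qed

lemma stage_le_Suc_stage: "stage k j \<le> stage (Suc k) j"
  using break_up_ge[of "stage k" j] funpow_round_ge[of "break_up (stage k)" j]
  unfolding stage.simps run_def by (rule order_trans)

lemma stage_mono: "i \<le> k \<Longrightarrow> stage i j \<le> stage k j"
proof (induction k)
  case (Suc k)
  then show ?case using stage_le_Suc_stage[of k j] by (auto simp: le_Suc_eq simp del: stage.simps)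
qed simp

lemma replay_0: "replay k 0 = break_up (stage k)"
  unfolding replay_def by simp

lemma replay_round_bound: "replay k round_bound = stage (Suc k)"
  unfolding replay_def by (simp add: run_def)

lemma replay_Suc: "replay k (Suc l) = proposal_round (replay k l)"
  unfolding replay_def by simp

lemma replay_mono: "l \<le> l' \<Longrightarrow> replay k l j \<le> replay k l' j"
  unfolding replay_def by (rule funpow_round_mono)

lemma replay_le_Suc_stage: "l \<le> round_bound \<Longrightarrow> replay k l j \<le> stage (Suc k) j"
  using replay_mono[of l round_bound k j] replay_round_bound by simp

lemma steps_succeed_Suc: "steps_succeed (Suc k) \<longleftrightarrow> steps_succeed k \<and> step_succeeds k"
  unfolding steps_succeed_def using less_Suc_eq by auto

lemma stable_below_next_stage:
  assumes stable: "stable_matching \<nu>" and below: "pointers_below (stage k) \<nu>"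
    and not_held: "(breakup_man (stage k), abandoned k) \<notin> \<nu>"
  shows "pointers_below (stage (Suc k)) \<nu> \<and> step_succeeds k"
proof -
  have "pointers_below (stage (Suc k)) \<nu>"
    using pointers_below_run[OF stable pointers_below_break_up[OF below stable]] not_held
    unfolding abandoned_def by simp
  then show ?thesis
    unfolding step_succeeds_def using suitors_unmatched_empty[OF stable] by blast
qed

lemma stable_below_stages:
  assumes stable: "stable_matching \<nu>"
    and avoids: "\<And>i. i < k \<Longrightarrow> steps_succeed i \<Longrightarrow> (breakup_man (stage i), abandoned i) \<notin> \<nu>"
  shows "pointers_below (stage k) \<nu> \<and> steps_succeed k"
  using avoids
proof (induction k)
  case 0
  then show ?case using pointers_below_man_optimal[OF stable] by (simp add: steps_succeed_def)
next
  case (Suc k)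
  then show ?case
    using stable_below_next_stage[OF stable] steps_succeed_Suc by (metis less_Suc_eq)
qed

definition settled :: "(nat \<Rightarrow> nat) \<Rightarrow> bool" where
  "settled q \<longleftrightarrow> (\<forall>j<n. q j < n+r) \<and> proposal_round q = q \<and> (\<forall>u\<in>unmatched. suitors q u = {})"

lemma unmatched_nonempty: "unmatched \<noteq> {}"
  using card_unmatched r_pos by auto

lemma settled_stage: "steps_succeed k \<Longrightarrow> settled (stage k)"
proof (induction k)
  case 0
  then show ?case
    unfolding settled_def using man_optimal_less man_optimal_fixpoint unfolding unmatched_def
    by simp
next
  case (Suc k)
  then have settled_k: "settled (stage k)" and succeeds: "step_succeeds k"
    using steps_succeed_Suc by auto
  have fixed: "proposal_round (stage (Suc k)) = stage (Suc k)"
    unfolding stage.simps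
  proof (rule run_fixpoint)
    fix j assume "j < n"
    then show "break_up (stage k) j \<le> n+r"
      using break_up_le_Suc[of "stage k" j] settled_k unfolding settled_def by fastforce
  qed
  have no_suitors: "\<forall>u\<in>unmatched. suitors (stage (Suc k)) u = {}"
    using succeeds unfolding step_succeeds_def by simp
  have "stage (Suc k) j < n+r" if j: "j < n" for j
  proof (rule ccontr)
    assume "\<not> stage (Suc k) j < n+r"
    obtain u where u: "u \<in> unmatched" using unmatched_nonempty by blast
    then have "u < n+r" using unmatched_subset by auto
    then have "j \<in> suitors (stage (Suc k)) u"
      using mem_proposed_iff[OF j] rank_PM_less[OF j] \<open>\<not> stage (Suc k) j < n+r\<close> j
      unfolding suitors_def by fastforce
    then show False using no_suitors u by blast
  qed
  then show ?case unfolding settled_def using fixed no_suitors by blast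
qed

lemma settled_proposal_not_unmatched: "settled q \<Longrightarrow> j < n \<Longrightarrow> proposal q j \<notin> unmatched"
  unfolding settled_def suitors_def using proposal_mem_proposed by blast

lemma settled_proposal_image:
  assumes "settled q"
  shows "proposal q ` {..<n} = {..<n+r} - unmatched"
proof (rule card_seteq)
  show "proposal q ` {..<n} \<subseteq> {..<n+r} - unmatched"
    using settled_proposal_not_unmatched[OF assms] proposal_less assms
    unfolding settled_def by blast
  show "card ({..<n+r} - unmatched) \<le> card (proposal q ` {..<n})"
    using card_image[OF inj_on_proposal_fixpoint] assms card_matched_women
    unfolding settled_def by simp
qed simp

lemma abandoned_woman:
  assumes "\<not> x_is_man" "steps_succeed k" "x0 < n+r" "x0 \<notin> unmatched"
  shows "abandoned k = x0"
proof -
  have settled: "settled (stage k)" using settled_stage[OF assms(2)] .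
  then obtain j where "j < n" "proposal (stage k) j = x0"
    using settled_proposal_image assms(3,4) by (metis DiffI imageE lessThan_iff)
  then show ?thesis
    using breakup_man_if_woman[OF assms(1)] settled unfolding abandoned_def settled_def by blast
qed

lemma steps_succeed_if_man_partners:
  assumes "x_is_man" "k < card (stable_partners_man n r PM PW x0)"
  shows "steps_succeed k"
proof -
  obtain w where "w \<in> stable_partners_man n r PM PW x0" "w \<notin> abandoned ` {..<k}"
    using exists_not_in_image_lessThan[OF assms(2)] by blast
  then obtain \<nu> where stable: "stable_matching \<nu>" and "(x0, w) \<in> \<nu>" "\<forall>i<k. abandoned i \<noteq> w"
    unfolding stable_partners_man_def by auto
  then have "(breakup_man (stage i), abandoned i) \<notin> \<nu>" if "i < k" for i
    using that breakup_man_if_man[OF assms(1)] stable_unique_woman[OF stable] by metis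
  then show ?thesis using stable_below_stages[OF stable] by blast
qed

lemma steps_succeed_if_woman_partners:
  assumes "\<not> x_is_man" "k < card (stable_partners_woman n r PM PW x0)"
  shows "steps_succeed k"
proof -
  obtain j where "j \<in> stable_partners_woman n r PM PW x0" "j \<notin> (breakup_man \<circ> stage) ` {..<k}"
    using exists_not_in_image_lessThan[OF assms(2)] by blast
  then obtain \<nu> where stable: "stable_matching \<nu>" and j: "(j, x0) \<in> \<nu>"
    and distinct: "\<forall>i<k. breakup_man (stage i) \<noteq> j"
    unfolding stable_partners_woman_def by auto
  have x0: "x0 < n+r" "x0 \<notin> unmatched"
    using stable_range[OF stable j] stable_unmatched[OF stable _ ] j by blast+
  have "(breakup_man (stage i), abandoned i) \<notin> \<nu>" if "i < k" "steps_succeed i" for i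
    using abandoned_woman[OF assms(1) that(2) x0] distinct that(1) stable_unique_man[OF stable j]
    by metis
  then show ?thesis using stable_below_stages[OF stable] by blast
qed

end

section \<open>The first critical proposal of a step\<close>

context divorce_chain
begin

definition critical :: "nat \<Rightarrow> nat \<Rightarrow> nat \<Rightarrow> bool" where
  "critical k l j \<longleftrightarrow> l \<le> round_bound \<and> j < n \<and> stage k j < replay k l j \<and> replay k l j < n+r
     \<and> proposal (replay k l) j \<in> insert (abandoned k) unmatched"

definition first_critical_round :: "nat \<Rightarrow> nat" where
  "first_critical_round k = (LEAST l. \<exists>j. critical k l j)"

definition first_critical_man :: "nat \<Rightarrow> nat" where
  "first_critical_man k = (LEAST j. critical k (first_critical_round k) j)"

definition first_critical_position :: "nat \<Rightarrow> nat" where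
  "first_critical_position k = replay k (first_critical_round k) (first_critical_man k)"

definition critical_to_abandoned :: "nat \<Rightarrow> bool" where
  "critical_to_abandoned k \<longleftrightarrow> (\<exists>l j. critical k l j)
     \<and> PM (first_critical_man k) ! first_critical_position k = abandoned k"

end

context divorce_chain_ok
begin

lemma step_data_in_range:
  assumes "steps_succeed k"
  shows "stage k (breakup_man (stage k)) < n+r" "abandoned k < n+r" "abandoned k \<notin> unmatched"
proof -
  have settled: "settled (stage k)" using settled_stage[OF assms] .
  show "stage k (breakup_man (stage k)) < n+r" using settled breakup_man_less unfolding settled_def
    by blast
  then show "abandoned k < n+r" unfolding abandoned_def using proposal_less breakup_man_less
    by blast
  show "abandoned k \<notin> unmatched"
    unfolding abandoned_def using settled_proposal_not_unmatched[OF settled breakup_man_less] .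
qed

lemma critical_to_abandoned_if_step_succeeds:
  assumes succeeds: "step_succeeds k" and crit: "critical k l j"
  shows "proposal (replay k l) j = abandoned k"
proof (rule ccontr)
  assume "proposal (replay k l) j \<noteq> abandoned k"
  moreover have l: "l \<le> round_bound" and j: "j < n" and "replay k l j < n+r"
    and "proposal (replay k l) j \<in> insert (abandoned k) unmatched"
    using crit unfolding critical_def by auto
  ultimately have "proposal (replay k l) j \<in> unmatched"
    and "proposal (replay k l) j \<in> proposed (replay k l) j"
    using proposal_mem_proposed by auto
  moreover have "proposed (replay k l) j \<subseteq> proposed (stage (Suc k)) j"
    using proposed_mono replay_le_Suc_stage[OF l] by blast
  ultimately show False
    using succeeds j unfolding step_succeeds_def suitors_def by blast
qed

text \<open>After a successful step, the abandoned woman is held again, by a man who must have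
  moved: the man holding her at stage \<open>k\<close> is the one who left her.\<close>

lemma critical_exists_if_step_succeeds:
  assumes "steps_succeed k" "step_succeeds k"
  shows "\<exists>l j. critical k l j"
proof (rule ccontr)
  assume no_critical: "\<not> (\<exists>l j. critical k l j)"
  have settled_k: "settled (stage k)" using settled_stage[OF assms(1)] .
  have settled_Suc: "settled (stage (Suc k))"
    using settled_stage assms steps_succeed_Suc by blast
  let ?d = "breakup_man (stage k)"
  let ?q = "stage (Suc k)"
  have "abandoned k \<in> {..<n+r} - unmatched"
    using step_data_in_range[OF assms(1)] by simp
  then obtain j where j: "j < n" and held: "proposal ?q j = abandoned k"
    using settled_proposal_image[OF settled_Suc] by (metis imageE lessThan_iff)
  show False
  proof (cases "?q j = stage k j")
    case True
    have "break_up (stage k) ?d \<le> ?q ?d"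
      unfolding stage.simps run_def by (rule funpow_round_ge)
    then have "j \<noteq> ?d" using True break_up_breakup_man[of "stage k"] by auto
    then have "proposal (stage k) j \<noteq> proposal (stage k) ?d"
      using inj_on_proposal_fixpoint settled_k j breakup_man_less
      unfolding settled_def inj_on_def by blast
    then show False using held True unfolding abandoned_def proposal_def by simp
  next
    case False
    then have "critical k round_bound j"
      using stage_le_Suc_stage[of k j] replay_round_bound j settled_Suc held
      unfolding critical_def settled_def by (simp add: le_neq_implies_less)
    then show False using no_critical by blast
  qed
qed

lemma first_critical:
  assumes "\<exists>l j. critical k l j"
  shows "critical k (first_critical_round k) (first_critical_man k)"
    and "\<And>l j. l < first_critical_round k \<Longrightarrow> \<not> critical k l j"
    and "\<And>j. j < first_critical_man k \<Longrightarrow> \<not> critical k (first_critical_round k) j"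
proof -
  have "\<exists>j. critical k (first_critical_round k) j"
    unfolding first_critical_round_def using LeastI_ex[where P = "\<lambda>l. \<exists>j. critical k l j"] assms
    by blast
  then show "critical k (first_critical_round k) (first_critical_man k)"
    unfolding first_critical_man_def by (rule LeastI_ex)
  show "\<And>l j. l < first_critical_round k \<Longrightarrow> \<not> critical k l j"
    unfolding first_critical_round_def using not_less_Least by blast
  show "\<And>j. j < first_critical_man k \<Longrightarrow> \<not> critical k (first_critical_round k) j"
    unfolding first_critical_man_def using not_less_Least by blast
qed

lemma steps_succeed_Suc_critical_to_abandoned:
  assumes "steps_succeed (Suc k)"
  shows "steps_succeed k \<and> critical_to_abandoned k"
proof -
  have "steps_succeed k" "step_succeeds k" using assms steps_succeed_Suc by auto
  moreover from this have "\<exists>l j. critical k l j" by (rule critical_exists_if_step_succeeds)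
  ultimately show ?thesis
    using critical_to_abandoned_if_step_succeeds first_critical(1)
    unfolding critical_to_abandoned_def first_critical_position_def proposal_def by blast
qed

lemma replay_Suc_le_Suc: "replay k (Suc l) j \<le> Suc (replay k l j)"
  using replay_Suc proposal_round_le_Suc by simp

lemma replay_visits:
  assumes "stage k j < c" "c \<le> replay k l j"
  shows "\<exists>l'\<le>l. replay k l' j = c"
  using assms(2)
proof (induction l)
  case 0
  then show ?case using replay_0 break_up_le_Suc[of "stage k" j] assms(1) by auto
next
  case (Suc l)
  show ?case
  proof (cases "c \<le> replay k l j")
    case True
    then show ?thesis using Suc.IH le_SucI by blast
  next
    case False
    then have "c = replay k (Suc l) j" using Suc.prems replay_Suc_le_Suc[of k l j] by simp
    then show ?thesis by blast
  qed
qed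

context
  fixes k :: nat
  assumes crit: "\<exists>l j. critical k l j"
begin

lemma first_critical_in_range:
  "first_critical_man k < n" "first_critical_round k \<le> round_bound"
  "stage k (first_critical_man k) < first_critical_position k" "first_critical_position k < n+r"
  using first_critical(1)[OF crit] unfolding critical_def first_critical_position_def by auto

lemma first_critical_moved_last:
  assumes "0 < first_critical_round k"
  shows "replay k (first_critical_round k - 1) (first_critical_man k) < first_critical_position k"
proof (rule ccontr)
  let ?t = "first_critical_round k" and ?j = "first_critical_man k"
  assume "\<not> replay k (?t - 1) ?j < first_critical_position k"
  then have "replay k (?t - 1) ?j = replay k ?t ?j"
    using replay_mono[of "?t - 1" ?t k ?j] unfolding first_critical_position_def by simp
  then have "critical k (?t - 1) ?j"
    using first_critical(1)[OF crit] unfolding critical_def proposal_def by auto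
  then show False using first_critical(2)[OF crit, of "?t - 1"] assms by simp
qed

lemma first_critical_before_unmatched:
  assumes succeed: "steps_succeed k" and abandoned: "critical_to_abandoned k" and u: "u \<in> unmatched"
  shows "first_critical_position k < rank (PM (first_critical_man k)) u"
proof (rule ccontr)
  let ?t = "first_critical_round k" and ?j = "first_critical_man k"
  let ?a = "first_critical_position k"
  have j: "?j < n" using first_critical_in_range by simp
  have u_range: "u < n+r" using u unmatched_subset by auto
  assume "\<not> ?a < rank (PM ?j) u"
  moreover have "rank (PM ?j) u \<noteq> ?a"
    using abandoned step_data_in_range(3)[OF succeed] u nth_rank_PM[OF j u_range]
    unfolding critical_to_abandoned_def by metis
  ultimately have before: "rank (PM ?j) u < ?a" by simp
  show False
  proof (cases "rank (PM ?j) u \<le> stage k ?j")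
    case True
    then have "?j \<in> suitors (stage k) u"
      using mem_proposed_iff[OF j u_range] j unfolding suitors_def by simp
    then show False using settled_stage[OF succeed] u unfolding settled_def by blast
  next
    case False
    txt \<open>The pointer of \<open>?j\<close> moves by single steps, so it passed \<open>u\<close> in an earlier round.\<close>
    have "0 < ?t"
    proof (rule ccontr)
      assume "\<not> 0 < ?t"
      then have "?a \<le> Suc (stage k ?j)"
        using replay_0 break_up_le_Suc[of "stage k" ?j] unfolding first_critical_position_def
        by simp
      then show False using False before by simp
    qed
    then have "rank (PM ?j) u \<le> replay k (?t - 1) ?j"
      using before replay_Suc_le_Suc[of k "?t - 1" ?j] unfolding first_critical_position_def by simp
    moreover have "stage k ?j < rank (PM ?j) u" using False by simp
    ultimately obtain l where l: "l \<le> ?t - 1" "replay k l ?j = rank (PM ?j) u"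
      using replay_visits by blast
    then have "critical k l ?j"
      using first_critical_in_range rank_PM_less[OF j u_range] nth_rank_PM[OF j u_range] u False
      unfolding critical_def proposal_def by auto
    then show False using first_critical(2)[OF crit, of l] l \<open>0 < ?t\<close> by simp
  qed
qed

end

end

section \<open>Runs that agree up to a position of one list\<close>

text \<open>Two profiles that differ only in the list of man \<open>j\<close>, beyond its first \<open>a\<close> entries,
  produce the same computation as long as the pointer of \<open>j\<close> stays below \<open>a\<close>.\<close>

locale prefix_agreement =
  fixes n r :: nat and PM PW :: "nat \<Rightarrow> nat list" and x_is_man :: bool and x0 :: nat
    and PM' :: "nat \<Rightarrow> nat list" and j a :: nat
  assumes chain: "divorce_chain_ok n r PM PW x_is_man x0"
    and chain': "divorce_chain_ok n r PM' PW x_is_man x0"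
    and other_PM_eq: "\<And>i. i \<noteq> j \<Longrightarrow> PM' i = PM i"
    and prefix_eq: "\<And>c. c < a \<Longrightarrow> PM' j ! c = PM j ! c"
    and j_less: "j < n"
begin

sublocale M: divorce_chain_ok n r PM PW x_is_man x0 by (rule chain)
sublocale M': divorce_chain_ok n r PM' PW x_is_man x0 by (rule chain')

lemma take_PM_eq: "c \<le> a \<Longrightarrow> take c (PM' j) = take c (PM j)"
  by (rule nth_equalityI) (auto simp: M.length_PM[OF j_less] M'.length_PM[OF j_less] prefix_eq)

lemma proposed_eq: "q j < a \<Longrightarrow> M'.proposed q i = M.proposed q i"
  unfolding M.proposed_def M'.proposed_def using take_PM_eq[of "Suc (q j)"] other_PM_eq[of i]
  by (cases "i = j") auto

lemma suitors_eq: "q j < a \<Longrightarrow> M'.suitors q w = M.suitors q w"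
  unfolding M.suitors_def M'.suitors_def using proposed_eq by simp

lemma proposal_eq: "q j < a \<Longrightarrow> M'.proposal q i = M.proposal q i"
  unfolding M.proposal_def M'.proposal_def using prefix_eq other_PM_eq[of i] by (cases "i = j") auto

lemma rejected_eq: "q j < a \<Longrightarrow> M'.rejected q i = M.rejected q i"
  unfolding M.rejected_def M'.rejected_def using suitors_eq proposal_eq by simp

lemma proposal_round_eq: "q j < a \<Longrightarrow> M'.proposal_round q = M.proposal_round q"
  unfolding M.proposal_round_def M'.proposal_round_def using rejected_eq by simp

lemma breakup_man_eq:
  assumes "q j < a"
  shows "M'.breakup_man q = M.breakup_man q"
proof -
  have same: "M'.proposal q = M.proposal q" using proposal_eq[of q] assms by blast
  show ?thesis unfolding M.breakup_man_def M'.breakup_man_def same ..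
qed

lemma break_up_eq: "q j < a \<Longrightarrow> M'.break_up q = M.break_up q"
  unfolding M.break_up_def M'.break_up_def using breakup_man_eq by simp

lemma funpow_round_eq:
  "(\<And>l'. l' < l \<Longrightarrow> (M.proposal_round ^^ l') q j < a) \<Longrightarrow>
    (M'.proposal_round ^^ l) q = (M.proposal_round ^^ l) q"
  by (induction l) (simp_all add: proposal_round_eq)

lemma run_eq: "M.run q j < a \<Longrightarrow> M'.run q = M.run q"
  unfolding M.run_def M'.run_def
  by (rule funpow_round_eq) (meson M.funpow_round_mono le_less_trans less_imp_le)

lemma man_optimal_eq: "M.man_optimal j < a \<Longrightarrow> M'.man_optimal = M.man_optimal"
  unfolding M.man_optimal_def M'.man_optimal_def using run_eq by simp

lemma unmatched_eq: "M.man_optimal j < a \<Longrightarrow> M'.unmatched = M.unmatched"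
  unfolding M.unmatched_def M'.unmatched_def using man_optimal_eq suitors_eq by simp

lemma stage_eq: "M.stage k j < a \<Longrightarrow> i \<le> k \<Longrightarrow> M'.stage i = M.stage i"
proof (induction k arbitrary: i)
  case 0
  then show ?case using man_optimal_eq by simp
next
  case (Suc k)
  have k: "M.stage k j < a" using Suc.prems(1) M.stage_le_Suc_stage[of k j] by simp
  have "M'.stage (Suc k) = M.stage (Suc k)"
    using Suc.IH[OF k, of k] break_up_eq[of "M.stage k", OF k] run_eq Suc.prems(1) by simp
  then show ?case using Suc.IH[OF k] Suc.prems(2) le_Suc_eq by auto
qed

lemma abandoned_eq: "M.stage k j < a \<Longrightarrow> M'.abandoned k = M.abandoned k"
  unfolding M.abandoned_def M'.abandoned_def using stage_eq[of k k] breakup_man_eq proposal_eq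
  by simp

lemma steps_succeed_eq:
  assumes "M.stage k j < a"
  shows "M'.steps_succeed k = M.steps_succeed k"
proof -
  have unmatched: "M'.unmatched = M.unmatched"
    using unmatched_eq M.stage_mono[of 0 k j] assms by simp
  have "M'.step_succeeds i = M.step_succeeds i" if "i < k" for i
    using M.stage_mono[of "Suc i" k j] that assms stage_eq[OF assms, of "Suc i"] suitors_eq
      unmatched
    unfolding M.step_succeeds_def M'.step_succeeds_def by simp
  then show ?thesis unfolding M.steps_succeed_def M'.steps_succeed_def by simp
qed

lemma replay_eq:
  assumes "M.stage k j < a" "\<And>l'. l' < l \<Longrightarrow> M.replay k l' j < a"
  shows "M'.replay k l = M.replay k l"
  unfolding M.replay_def M'.replay_def stage_eq[OF assms(1) order_refl]
    break_up_eq[of "M.stage k", OF assms(1)]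
  using assms(2) unfolding M.replay_def by (rule funpow_round_eq)

end

section \<open>Exchanging the abandoned woman with an unmatched one\<close>

context divorce_chain
begin

definition swapped_PM :: "nat \<Rightarrow> nat \<Rightarrow> nat \<Rightarrow> nat list" where
  "swapped_PM k u = PM(first_critical_man k := swap_entries (PM (first_critical_man k))
     (first_critical_position k) (rank (PM (first_critical_man k)) u))"

end

context divorce_chain_ok
begin

context
  fixes k u :: nat
  assumes succeed: "steps_succeed k" and to_abandoned: "critical_to_abandoned k"
    and u: "u \<in> unmatched"
begin

private lemma crit: "\<exists>l j. critical k l j"
  using to_abandoned unfolding critical_to_abandoned_def by blast

lemma swap_positions:
  "first_critical_man k < n" "first_critical_position k < rank (PM (first_critical_man k)) u"
  "rank (PM (first_critical_man k)) u < n+r"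
  "PM (first_critical_man k) ! rank (PM (first_critical_man k)) u = u"
  using first_critical_in_range[OF crit]
    first_critical_before_unmatched[OF crit succeed to_abandoned u]
    rank_PM_less nth_rank_PM u unmatched_subset by auto

lemma swapped_PM_at_critical_man:
  "swapped_PM k u (first_critical_man k) = swap_entries (PM (first_critical_man k))
     (first_critical_position k) (rank (PM (first_critical_man k)) u)"
  unfolding swapped_PM_def by simp

lemma divorce_chain_ok_swapped: "divorce_chain_ok n r (swapped_PM k u) PW x_is_man x0"
proof
  fix i assume "i < n"
  then show "swapped_PM k u i \<in> permutations_of_set {..<n+r}"
    unfolding swapped_PM_def
    using swap_entries_permutations_of_set[OF PM_perm[OF swap_positions(1)]]
      swap_positions(2,3) length_PM[OF swap_positions(1)] PM_perm by auto
qed (use PW_perm n_pos r_pos x0_man in auto)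

lemma prefix_agreement_swapped:
  "prefix_agreement n r PM PW x_is_man x0 (swapped_PM k u)
     (first_critical_man k) (first_critical_position k)"
proof (rule prefix_agreement.intro)
  show "divorce_chain_ok n r PM PW x_is_man x0" by (rule divorce_chain_ok_axioms)
  show "divorce_chain_ok n r (swapped_PM k u) PW x_is_man x0" by (rule divorce_chain_ok_swapped)
  show "\<And>c. c < first_critical_position k \<Longrightarrow>
      swapped_PM k u (first_critical_man k) ! c = PM (first_critical_man k) ! c"
    unfolding swapped_PM_def using swap_positions length_PM by (simp add: nth_swap_entries)
qed (auto simp: swapped_PM_def swap_positions)

interpretation S: prefix_agreement n r PM PW x_is_man x0 "swapped_PM k u"
    "first_critical_man k" "first_critical_position k"
  by (rule prefix_agreement_swapped)

lemma stage_less_critical_position: "stage k (first_critical_man k) < first_critical_position k"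
  using first_critical_in_range[OF crit] by simp

lemma replay_less_critical_position:
  assumes "l < first_critical_round k"
  shows "replay k l (first_critical_man k) < first_critical_position k"
proof -
  have "replay k l (first_critical_man k)
      \<le> replay k (first_critical_round k - 1) (first_critical_man k)"
    using assms by (intro replay_mono) simp
  also have "\<dots> < first_critical_position k"
    using first_critical_moved_last[OF crit] assms by simp
  finally show ?thesis .
qed

lemma swapped_stage: "S.M'.stage k = stage k"
  using S.stage_eq[OF stage_less_critical_position] by simp

lemma swapped_steps_succeed: "S.M'.steps_succeed k"
  using S.steps_succeed_eq[OF stage_less_critical_position] succeed by simp

lemma swapped_unmatched: "S.M'.unmatched = unmatched"
  using S.unmatched_eq le_less_trans[OF stage_mono[of 0 k] stage_less_critical_position] by simp

lemma swapped_abandoned: "S.M'.abandoned k = abandoned k"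
  using S.abandoned_eq[OF stage_less_critical_position] .

lemma swapped_replay: "l \<le> first_critical_round k \<Longrightarrow> S.M'.replay k l = replay k l"
  using S.replay_eq[OF stage_less_critical_position] replay_less_critical_position by simp

lemma swapped_PM_critical_position:
  "swapped_PM k u (first_critical_man k) ! first_critical_position k = u"
  using swap_positions length_PM unfolding swapped_PM_def by (simp add: nth_swap_entries)

lemma swapped_critical_before:
  assumes "l < first_critical_round k \<or> (l = first_critical_round k \<and> i < first_critical_man k)"
    and "S.M'.critical k l i"
  shows False
proof -
  have "S.M'.proposal (replay k l) i = proposal (replay k l) i"
  proof (cases "i = first_critical_man k")
    case True
    then show ?thesis
      using assms(1) S.proposal_eq replay_less_critical_position by simp
  next
    case False
    then show ?thesis
      using S.other_PM_eq unfolding S.M'.proposal_def proposal_def by simp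
  qed
  moreover have "S.M'.replay k l = replay k l" using swapped_replay assms(1) by auto
  ultimately have "critical k l i"
    using assms(2) swapped_stage swapped_abandoned swapped_unmatched
    unfolding S.M'.critical_def critical_def by simp
  then show False using first_critical(2,3)[OF crit] assms(1) by blast
qed


lemma swapped_critical_at_first: "S.M'.critical k (first_critical_round k) (first_critical_man k)"
  using first_critical_in_range[OF crit] swapped_replay[OF order_refl] swapped_stage
    swapped_PM_critical_position swapped_unmatched u
  unfolding S.M'.critical_def S.M'.proposal_def first_critical_position_def by simp

lemma swapped_first_critical_round: "S.M'.first_critical_round k = first_critical_round k"
  unfolding S.M'.first_critical_round_def
proof (rule Least_equality)
  show "\<exists>j. S.M'.critical k (first_critical_round k) j"
    using swapped_critical_at_first by blast
qed (use swapped_critical_before not_le in blast)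

lemma swapped_first_critical_man: "S.M'.first_critical_man k = first_critical_man k"
  unfolding S.M'.first_critical_man_def swapped_first_critical_round
  by (rule Least_equality) (use swapped_critical_at_first swapped_critical_before not_le in blast)+

lemma swapped_first_critical_position: "S.M'.first_critical_position k = first_critical_position k"
  unfolding S.M'.first_critical_position_def swapped_first_critical_round swapped_first_critical_man
  using swapped_replay[OF order_refl] unfolding first_critical_position_def by simp

lemma swapped_step_fails: "\<not> S.M'.step_succeeds k"
proof
  assume "S.M'.step_succeeds k"
  then have "S.M'.proposal (S.M'.replay k (first_critical_round k)) (first_critical_man k)
      = abandoned k"
    using S.M'.critical_to_abandoned_if_step_succeeds swapped_critical_at_first swapped_abandoned
    by simp
  then have "u = abandoned k"
    using swapped_first_critical_position swapped_PM_critical_position swapped_first_critical_round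
      swapped_first_critical_man
    unfolding S.M'.proposal_def S.M'.first_critical_position_def by simp
  then show False using step_data_in_range(3)[OF succeed] u by simp
qed

text \<open>The exchange can be undone from the swapped profile alone: the abandoned woman now sits
  at the position of \<open>u\<close> in the list of the first critical man.\<close>

lemma swapped_undo:
  "(swapped_PM k u)(first_critical_man k := swap_entries (swapped_PM k u (first_critical_man k))
     (first_critical_position k) (rank (swapped_PM k u (first_critical_man k)) (abandoned k))) = PM"
proof -
  let ?j = "first_critical_man k" and ?a = "first_critical_position k"
  let ?b = "rank (PM ?j) u" and ?P' = "swapped_PM k u ?j"
  have j: "?j < n" and ab: "?a < ?b" "?b < n+r" using swap_positions by auto
  have len: "length (PM ?j) = n+r" using length_PM[OF j] .
  have "?P' ! ?b = abandoned k"
    using swapped_PM_at_critical_man nth_swap_entries[of ?a "PM ?j" ?b ?b] ab len to_abandoned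
    unfolding critical_to_abandoned_def by simp
  moreover have "distinct ?P'"
    using S.M'.distinct_PM[OF j] swapped_PM_def by simp
  ultimately have "rank ?P' (abandoned k) = ?b"
    using rank_nth[of ?P' ?b] swapped_PM_at_critical_man ab len by simp
  moreover have "swap_entries ?P' ?a ?b = PM ?j"
    using swapped_PM_at_critical_man swap_entries_involution[of ?a "PM ?j" ?b] ab len by simp
  ultimately show ?thesis unfolding swapped_PM_def by auto
qed

end

end

section \<open>Counting profiles\<close>

type_synonym profile = "(nat \<Rightarrow> nat list) \<times> (nat \<Rightarrow> nat list)"

definition successful_profiles :: "nat \<Rightarrow> nat \<Rightarrow> bool \<Rightarrow> nat \<Rightarrow> nat \<Rightarrow> profile set" where
  "successful_profiles n r x_is_man x0 k =
     {P \<in> profiles n r. divorce_chain.steps_succeed n r (fst P) (snd P) x_is_man x0 k}"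

definition critical_profiles :: "nat \<Rightarrow> nat \<Rightarrow> bool \<Rightarrow> nat \<Rightarrow> nat \<Rightarrow> profile set" where
  "critical_profiles n r x_is_man x0 k = {P \<in> successful_profiles n r x_is_man x0 k.
     divorce_chain.critical_to_abandoned n r (fst P) (snd P) x_is_man x0 k}"

definition swap_profile :: "nat \<Rightarrow> nat \<Rightarrow> bool \<Rightarrow> nat \<Rightarrow> nat \<Rightarrow> profile \<times> nat \<Rightarrow> profile" where
  "swap_profile n r x_is_man x0 k =
     (\<lambda>(P, u). (divorce_chain.swapped_PM n r (fst P) (snd P) x_is_man x0 k u, snd P))"

definition unswap_profile :: "nat \<Rightarrow> nat \<Rightarrow> bool \<Rightarrow> nat \<Rightarrow> nat \<Rightarrow> profile \<Rightarrow> profile \<times> nat" where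
  "unswap_profile n r x_is_man x0 k P' = (let PM' = fst P'; PW = snd P';
      j = divorce_chain.first_critical_man n r PM' PW x_is_man x0 k;
      a = divorce_chain.first_critical_position n r PM' PW x_is_man x0 k;
      x = divorce_chain.abandoned n r PM' PW x_is_man x0 k
    in ((PM'(j := swap_entries (PM' j) a (rank (PM' j) x)), PW), PM' j ! a))"

lemma profiles_finite: "finite (profiles n r)"
  unfolding profiles_def by (intro finite_cartesian_product finite_PiE) auto

lemma profiles_nonempty: "profiles n r \<noteq> {}"
proof -
  have "permutations_of_set {..<m} \<noteq> {}" for m :: nat
    using finite_distinct_list[of "{..<m}"] unfolding permutations_of_set_def by auto
  then show ?thesis unfolding profiles_def by (simp add: PiE_eq_empty_iff)
qed

lemma profiles_iff:
  "P \<in> profiles n r \<longleftrightarrow>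
     (\<forall>j<n. fst P j \<in> permutations_of_set {..<n+r}) \<and> (\<forall>w<n+r. snd P w \<in> permutations_of_set {..<n})
     \<and> (\<forall>j\<ge>n. fst P j = undefined) \<and> (\<forall>w\<ge>n+r. snd P w = undefined)"
  unfolding profiles_def by (cases P) (auto simp: PiE_iff extensional_def)

context
  fixes n r :: nat and x_is_man :: bool and x0 :: nat
  assumes n_pos: "n \<ge> 1" and r_pos: "r \<ge> 1" and x0_man: "x_is_man \<longrightarrow> x0 < n"
begin

lemma divorce_chain_ok_profile:
  "P \<in> profiles n r \<Longrightarrow> divorce_chain_ok n r (fst P) (snd P) x_is_man x0"
  by unfold_locales (use n_pos r_pos x0_man in \<open>auto simp: profiles_iff\<close>)

lemma swap_profile_fails:
  assumes "P \<in> critical_profiles n r x_is_man x0 k"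
    and "u \<in> gale_shapley.unmatched n r (fst P) (snd P)"
  shows "swap_profile n r x_is_man x0 k (P, u)
    \<in> successful_profiles n r x_is_man x0 k - successful_profiles n r x_is_man x0 (Suc k)"
    and "unswap_profile n r x_is_man x0 k (swap_profile n r x_is_man x0 k (P, u)) = (P, u)"
proof -
  have P: "P \<in> profiles n r"
    and hyps: "divorce_chain.steps_succeed n r (fst P) (snd P) x_is_man x0 k"
      "divorce_chain.critical_to_abandoned n r (fst P) (snd P) x_is_man x0 k"
      "u \<in> gale_shapley.unmatched n r (fst P) (snd P)"
    using assms unfolding critical_profiles_def successful_profiles_def by auto
  interpret M: divorce_chain_ok n r "fst P" "snd P" x_is_man x0
    using divorce_chain_ok_profile[OF P] .
  interpret S: prefix_agreement n r "fst P" "snd P" x_is_man x0 "M.swapped_PM k u"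
      "M.first_critical_man k" "M.first_critical_position k"
    by (rule M.prefix_agreement_swapped[OF hyps])
  have "(M.swapped_PM k u, snd P) \<in> profiles n r"
    using S.M'.PM_perm M.PW_perm P M.swap_positions[OF hyps]
    unfolding profiles_iff M.swapped_PM_def by auto
  moreover have "S.M'.steps_succeed k" "\<not> S.M'.steps_succeed (Suc k)"
    using M.swapped_steps_succeed[OF hyps] M.swapped_step_fails[OF hyps]
    by (auto simp: S.M'.steps_succeed_Suc)
  ultimately show "swap_profile n r x_is_man x0 k (P, u)
    \<in> successful_profiles n r x_is_man x0 k - successful_profiles n r x_is_man x0 (Suc k)"
    unfolding swap_profile_def successful_profiles_def by simp
  show "unswap_profile n r x_is_man x0 k (swap_profile n r x_is_man x0 k (P, u)) = (P, u)"
    using M.swapped_undo[OF hyps] M.swapped_PM_critical_position[OF hyps]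
      M.swapped_first_critical_man[OF hyps] M.swapped_first_critical_position[OF hyps]
      M.swapped_abandoned[OF hyps]
    unfolding unswap_profile_def swap_profile_def Let_def by simp
qed

lemma successful_profiles_Suc_subset:
  "successful_profiles n r x_is_man x0 (Suc k) \<subseteq> critical_profiles n r x_is_man x0 k"
proof
  fix P assume P: "P \<in> successful_profiles n r x_is_man x0 (Suc k)"
  then interpret M: divorce_chain_ok n r "fst P" "snd P" x_is_man x0
    using divorce_chain_ok_profile unfolding successful_profiles_def by blast
  show "P \<in> critical_profiles n r x_is_man x0 k"
    using M.steps_succeed_Suc_critical_to_abandoned P
    unfolding successful_profiles_def critical_profiles_def by auto
qed

lemma successful_profiles_antimono:
  "successful_profiles n r x_is_man x0 (Suc k) \<subseteq> successful_profiles n r x_is_man x0 k"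
  using successful_profiles_Suc_subset unfolding critical_profiles_def by blast

lemma card_critical_profiles:
  "r * card (critical_profiles n r x_is_man x0 k)
    \<le> card (successful_profiles n r x_is_man x0 k - successful_profiles n r x_is_man x0 (Suc k))"
proof -
  let ?C = "critical_profiles n r x_is_man x0 k"
  let ?A = "successful_profiles n r x_is_man x0"
  let ?U = "\<lambda>P. gale_shapley.unmatched n r (fst P) (snd P)"
  let ?pairs = "Sigma ?C ?U"
  have finite_C: "finite ?C"
    using profiles_finite unfolding critical_profiles_def successful_profiles_def by simp
  have card_U: "card (?U P) = r" if "P \<in> ?C" for P
    using gale_shapley_ok.card_unmatched divorce_chain_ok_profile that
    unfolding critical_profiles_def successful_profiles_def divorce_chain_ok_def by blast
  then have "r * card ?C = card ?pairs"
    using card_SigmaI[OF finite_C, of ?U] r_pos by (simp add: card_ge_0_finite)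
  also have "\<dots> = card (swap_profile n r x_is_man x0 k ` ?pairs)"
  proof (rule card_image[symmetric], rule inj_on_inverseI)
    fix x assume "x \<in> ?pairs"
    then show "unswap_profile n r x_is_man x0 k (swap_profile n r x_is_man x0 k x) = x"
      using swap_profile_fails(2) by (cases x) simp
  qed
  also have "\<dots> \<le> card (?A k - ?A (Suc k))"
  proof (rule card_mono)
    show "swap_profile n r x_is_man x0 k ` ?pairs \<subseteq> ?A k - ?A (Suc k)"
    proof (rule image_subsetI)
      fix x assume "x \<in> ?pairs"
      then obtain P u where "x = (P, u)" "P \<in> ?C" "u \<in> ?U P"
        by blast
      then show "swap_profile n r x_is_man x0 k x \<in> ?A k - ?A (Suc k)"
        using swap_profile_fails(1)[of P k u] by blast
    qed
  qed (use profiles_finite in \<open>simp add: successful_profiles_def\<close>)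
  finally show ?thesis .
qed

lemma card_successful_profiles_Suc:
  "(r+1) * card (successful_profiles n r x_is_man x0 (Suc k))
    \<le> card (successful_profiles n r x_is_man x0 k)"
proof -
  let ?A = "successful_profiles n r x_is_man x0"
  have finite_A: "finite (?A k)" using profiles_finite unfolding successful_profiles_def by simp
  have "r * card (?A (Suc k)) \<le> r * card (critical_profiles n r x_is_man x0 k)"
    using card_mono[OF _ successful_profiles_Suc_subset] finite_A
    unfolding critical_profiles_def by (simp add: mult_le_mono2)
  also have "\<dots> \<le> card (?A k - ?A (Suc k))"
    by (rule card_critical_profiles)
  also have "\<dots> = card (?A k) - card (?A (Suc k))"
    using card_Diff_subset[OF finite_subset[OF successful_profiles_antimono finite_A]
        successful_profiles_antimono] .
  finally show ?thesis
    using card_mono[OF finite_A successful_profiles_antimono] by simp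
qed

lemma card_successful_profiles:
  "card (successful_profiles n r x_is_man x0 k) * (r+1)^k \<le> card (profiles n r)"
proof (induction k)
  case 0
  then show ?case unfolding successful_profiles_def divorce_chain.steps_succeed_def by simp
next
  case (Suc k)
  have "card (successful_profiles n r x_is_man x0 (Suc k)) * (r+1)^Suc k
      = ((r+1) * card (successful_profiles n r x_is_man x0 (Suc k))) * (r+1)^k"
    by (simp add: algebra_simps)
  also have "\<dots> \<le> card (successful_profiles n r x_is_man x0 k) * (r+1)^k"
    using card_successful_profiles_Suc by (rule mult_le_mono1)
  finally show ?case using Suc.IH by simp
qed

end

lemma card_tail_profiles:
  assumes "n \<ge> 1" "r \<ge> 1" "x_is_man \<longrightarrow> x0 < n"
    and tail: "\<And>P. P \<in> profiles n r \<Longrightarrow> k < N P \<Longrightarrow>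
      divorce_chain.steps_succeed n r (fst P) (snd P) x_is_man x0 k"
  shows "card {P \<in> profiles n r. k < N P} * (r+1)^k \<le> card (profiles n r)"
proof -
  have "{P \<in> profiles n r. k < N P} \<subseteq> successful_profiles n r x_is_man x0 k"
    using tail unfolding successful_profiles_def by blast
  then have "card {P \<in> profiles n r. k < N P} \<le> card (successful_profiles n r x_is_man x0 k)"
    by (rule card_mono[rotated]) (simp add: successful_profiles_def profiles_finite)
  then have "card {P \<in> profiles n r. k < N P} * (r+1)^k
      \<le> card (successful_profiles n r x_is_man x0 k) * (r+1)^k"
    by (rule mult_le_mono1)
  also have "\<dots> \<le> card (profiles n r)"
    using card_successful_profiles assms(1-3) by simp
  finally show ?thesis .
qed

section \<open>From geometric tails to the two bounds\<close>

lemma sum_eq_sum_card_less: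
  fixes N :: "'a \<Rightarrow> nat"
  assumes "finite S" "\<And>P. P \<in> S \<Longrightarrow> N P \<le> B"
  shows "(\<Sum>P\<in>S. N P) = (\<Sum>k<B. card {P\<in>S. k < N P})"
proof -
  have "N P = (\<Sum>k<B. if k < N P then 1 else 0)" if "P \<in> S" for P
  proof -
    have "{..<B} \<inter> {k. k < N P} = {..<N P}" using assms(2)[OF that] by auto
    then show ?thesis by (simp add: sum.If_cases)
  qed
  then have "(\<Sum>P\<in>S. N P) = (\<Sum>P\<in>S. \<Sum>k<B. if k < N P then 1 else 0)" by simp
  also have "\<dots> = (\<Sum>k<B. \<Sum>P\<in>S. if k < N P then 1 else 0)" by (rule sum.swap)
  also have "\<dots> = (\<Sum>k<B. card {P\<in>S. k < N P})"
    using assms(1) by (simp add: sum.If_cases Collect_conj_eq Int_commute)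
  finally show ?thesis .
qed

lemma geometric_tail_bounds:
  fixes N :: "'a \<Rightarrow> nat" and r :: nat
  assumes finite: "finite S" and nonempty: "S \<noteq> {}" and r: "r \<ge> 1"
    and tail: "\<And>k. card {P\<in>S. k < N P} * (r+1)^k \<le> card S"
  shows "real (card {P\<in>S. N P > 1}) / real (card S) \<le> 1 / (real r + 1)"
    and "(\<Sum>P\<in>S. real (N P)) / real (card S) \<le> 1 + 1 / real r"
proof -
  define c where "c = real (card S)"
  define \<rho> where "\<rho> = 1 / (real r + 1)"
  have c_pos: "c > 0" using finite nonempty unfolding c_def by (simp add: card_gt_0_iff)
  have \<rho>: "0 < \<rho>" "\<rho> < 1" using r unfolding \<rho>_def by (simp_all add: field_simps)
  have tail_real: "real (card {P\<in>S. k < N P}) \<le> c * \<rho> ^ k" for k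
  proof -
    have "real (card {P\<in>S. k < N P} * (r+1)^k) \<le> real (card S)"
      using tail[of k] by (simp only: of_nat_le_iff)
    then have "real (card {P\<in>S. k < N P}) * (real r + 1) ^ k \<le> c"
      unfolding c_def by (simp add: add.commute)
    then show ?thesis
      unfolding \<rho>_def power_one_over by (simp add: divide_simps)
  qed
  show "real (card {P\<in>S. N P > 1}) / real (card S) \<le> 1 / (real r + 1)"
    using tail_real[of 1] c_pos unfolding c_def \<rho>_def by (simp add: divide_simps)
  obtain B where B: "\<And>P. P \<in> S \<Longrightarrow> N P \<le> B"
    using finite_nat_set_iff_bounded_le[of "N ` S"] finite by blast
  have "(\<Sum>P\<in>S. real (N P)) = real (\<Sum>P\<in>S. N P)"
    by simp
  also have "\<dots> = (\<Sum>k<B. real (card {P\<in>S. k < N P}))"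
    by (simp only: sum_eq_sum_card_less[OF finite B] of_nat_sum)
  also have "\<dots> \<le> (\<Sum>k<B. c * \<rho> ^ k)"
    by (rule sum_mono) (rule tail_real)
  also have "\<dots> = c * (\<Sum>k<B. \<rho> ^ k)"
    by (simp add: sum_distrib_left)
  also have "\<dots> \<le> c * (1 / (1 - \<rho>))"
    using geometric_sum_less[OF \<rho> finite_lessThan[of B]] c_pos by (intro mult_left_mono) auto
  also have "1 / (1 - \<rho>) = 1 + 1 / real r"
    using r unfolding \<rho>_def by (simp add: field_simps)
  finally have "(\<Sum>P\<in>S. real (N P)) \<le> c * (1 + 1 / real r)" .
  then show "(\<Sum>P\<in>S. real (N P)) / real (card S) \<le> 1 + 1 / real r"
    using c_pos unfolding c_def by (simp add: pos_divide_le_eq mult.commute)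
qed

theorem lemmaA3:
  fixes n r :: nat
  assumes "n \<ge> 1" and "r \<ge> 1"
  shows "(\<forall>m<n.
            real (card {P \<in> profiles n r. card (stable_partners_man n r (fst P) (snd P) m) > 1})
              / real (card (profiles n r)) \<le> 1 / (real r + 1)
          \<and> (\<Sum>P\<in>profiles n r. real (card (stable_partners_man n r (fst P) (snd P) m)))
              / real (card (profiles n r)) \<le> 1 + 1 / real r)
       \<and> (\<forall>w<n+r.
            real (card {P \<in> profiles n r. card (stable_partners_woman n r (fst P) (snd P) w) > 1})
              / real (card (profiles n r)) \<le> 1 / (real r + 1)
          \<and> (\<Sum>P\<in>profiles n r. real (card (stable_partners_woman n r (fst P) (snd P) w)))
              / real (card (profiles n r)) \<le> 1 + 1 / real r)"
proof (intro conjI allI impI)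
  fix m assume m: "m < n"
  have "card {P \<in> profiles n r. k < card (stable_partners_man n r (fst P) (snd P) m)} * (r+1)^k
      \<le> card (profiles n r)" for k
    using assms m
      divorce_chain_ok.steps_succeed_if_man_partners[OF divorce_chain_ok_profile[of n r True m]]
    by (intro card_tail_profiles[of n r True m]) simp_all
  note bounds = geometric_tail_bounds[OF profiles_finite profiles_nonempty assms(2) this]
  show "real (card {P \<in> profiles n r. card (stable_partners_man n r (fst P) (snd P) m) > 1})
      / real (card (profiles n r)) \<le> 1 / (real r + 1)" by (rule bounds(1))
  show "(\<Sum>P\<in>profiles n r. real (card (stable_partners_man n r (fst P) (snd P) m)))
      / real (card (profiles n r)) \<le> 1 + 1 / real r" by (rule bounds(2))
next
  fix w assume "w < n+r"
  have "card {P \<in> profiles n r. k < card (stable_partners_woman n r (fst P) (snd P) w)} * (r+1)^k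
      \<le> card (profiles n r)" for k
    using assms
      divorce_chain_ok.steps_succeed_if_woman_partners[OF divorce_chain_ok_profile[of n r False w]]
    by (intro card_tail_profiles[of n r False w]) simp_all
  note bounds = geometric_tail_bounds[OF profiles_finite profiles_nonempty assms(2) this]
  show "real (card {P \<in> profiles n r. card (stable_partners_woman n r (fst P) (snd P) w) > 1})
      / real (card (profiles n r)) \<le> 1 / (real r + 1)" by (rule bounds(1))
  show "(\<Sum>P\<in>profiles n r. real (card (stable_partners_woman n r (fst P) (snd P) w)))
      / real (card (profiles n r)) \<le> 1 + 1 / real r" by (rule bounds(2))
qed

end
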